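(* Let $m$ be an odd integer $\ge5$ and $l\ge(m+1)/2$. For any $u_1,\ldots,u_m\in V$, $$(\pi\otimes1_V^{\otimes m-4}\otimes\pi)(1_V^{\otimes m}\otimes C^{\otimes l})|u_1u_2\cdots u_m\omega_0^l| = (\pi\otimes1_V^{\otimes m-4}\otimes\pi)\big((2g)^lu_1u_2\cdots u_m+(-1)^l\Phi(u)\big),$$ where $$\Phi(u)=\sum_{\substack{1\le k\le m-1\\ k\text{ odd}}}(-1)^{\frac{k-1}2}\Big(\mathrm{Cont}(u_{m-k+1}\cdots u_{m-1})\,u_m\omega_0^{\frac{k-1}2}u_1u_2\cdots u_{m-k}+\mathrm{Cont}(u_2\cdots u_k)\,u_{k+1}\cdots u_m\omega_0^{\frac{k-1}2}u_1\Big).$$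
   Context: $\mathbb{K}$ is a field of characteristic zero and $V$ a symplectic $\mathbb{K}$-vector space of dimension $2g$ with symplectic basis $a_1,\ldots,a_g,b_1,\ldots,b_g$; $\omega_0=\sum_i(a_i\otimes b_i-b_i\otimes a_i)\in V^{\otimes 2}$. $C\colon V^{\otimes2}\to\mathbb{K}$ is bilinear with $C(a_i\otimes b_j)=\delta_{ij}$, $C(b_i\otimes a_j)=-\delta_{ij}$, $C(a_i\otimes a_j)=C(b_i\otimes b_j)=0$ (so $C(\omega_0)=2g$); $Q=\ker C$ and $\pi\colon V^{\otimes2}\to Q$ is the projection along the decomposition $V^{\otimes2}=Q\oplus\mathbb{K}\omega_0$. Products are taken in the tensor algebra $T(V)$. Here $|\cdot|$ is the cyclic symmetrization $|x_1x_2\cdots x_N|=\sum_{k=0}^{N-1}\nu^k(x_1\cdots x_N)$ for $x_i\in V$, where $\nu(x_1x_2\cdots x_N)=x_2\cdots x_Nx_1$ (this identifies $T(V)/[T(V),T(V)]$ with cyclically invariant tensors). $C^{\otimes l}$ is applied to the last $2l$ tensor factors in consecutive pairs. For $v_1,\ldots,v_{2r}\in V$, $\mathrm{Cont}(v_1v_2\cdots v_{2r})=C(v_1\otimes v_2)C(v_3\otimes v_4)\cdots C(v_{2r-1}\otimes v_{2r})$ (equal to $1$ for $r=0$). *)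

theory Defs
  imports Main
begin

text \<open>Model: V = K^(2g) with basis e_0..e_(2g-1), where a_i = e_i and b_i = e_(g+i) (i < g).
  A vector is a function nat => 'a vanishing at indices >= 2g.
  An element of the tensor algebra T(V) is a function on words (nat lists);
  the coefficient of e_(i1) (x) ... (x) e_(iN) is x [i1,...,iN].\<close>

type_synonym 'a tensor = "nat list \<Rightarrow> 'a"

definition tunit :: "'a::field tensor" where
  "tunit w = (if w = [] then 1 else 0)"

definition tmul :: "'a::field tensor \<Rightarrow> 'a tensor \<Rightarrow> 'a tensor" where
  "tmul x y w = (\<Sum>k\<le>length w. x (take k w) * y (drop k w))"

definition tprod :: "'a::field tensor list \<Rightarrow> 'a tensor" where
  "tprod xs = foldr tmul xs tunit"

definition tpow :: "'a::field tensor \<Rightarrow> nat \<Rightarrow> 'a tensor" where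
  "tpow x n = tprod (replicate n x)"

definition vt :: "(nat \<Rightarrow> 'a::field) \<Rightarrow> 'a tensor" where
  "vt u w = (case w of [i] \<Rightarrow> u i | _ \<Rightarrow> 0)"

definition vprod :: "(nat \<Rightarrow> nat \<Rightarrow> 'a::field) \<Rightarrow> nat \<Rightarrow> nat \<Rightarrow> 'a tensor" where
  "vprod u i j = tprod (map (\<lambda>k. vt (u k)) [i..<Suc j])"

text \<open>omega_0 = sum_i (a_i b_i - b_i a_i)\<close>
definition omega0 :: "nat \<Rightarrow> 'a::field tensor" where
  "omega0 g w = (if \<exists>i<g. w = [i, g+i] then 1 else if \<exists>i<g. w = [g+i, i] then -1 else 0)"

text \<open>C on basis tensors: C(a_i b_j) = delta_ij, C(b_i a_j) = - delta_ij, else 0\<close>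
definition Cf :: "nat \<Rightarrow> nat \<Rightarrow> nat \<Rightarrow> 'a::field" where
  "Cf g i j = (if i < g \<and> j = g + i then 1 else if j < g \<and> i = g + j then -1 else 0)"

definition Cbil :: "nat \<Rightarrow> (nat \<Rightarrow> 'a::field) \<Rightarrow> (nat \<Rightarrow> 'a) \<Rightarrow> 'a" where
  "Cbil g x y = (\<Sum>i<2*g. \<Sum>j<2*g. Cf g i j * x i * y j)"

text \<open>Cont(v_1 ... v_2r) = C(v1 v2) ... C(v_(2r-1) v_2r); only used on even-length lists\<close>
fun Cont :: "nat \<Rightarrow> (nat \<Rightarrow> 'a::field) list \<Rightarrow> 'a" where
  "Cont g [] = 1"
| "Cont g [x] = 0"
| "Cont g (x # y # r) = Cbil g x y * Cont g r"

definition cyc :: "'a::field tensor \<Rightarrow> 'a tensor" where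
  "cyc x w = (\<Sum>k<length w. x (rotate k w))"

definition words :: "nat \<Rightarrow> nat \<Rightarrow> nat list set" where
  "words g n = {v. length v = n \<and> set v \<subseteq> {..<2*g}}"

text \<open>1_V^(m) (x) C^(l) : V^(m+2l) -> V^(m), contracting the last 2l factors in consecutive pairs\<close>
definition contr :: "nat \<Rightarrow> nat \<Rightarrow> nat \<Rightarrow> 'a::field tensor \<Rightarrow> 'a tensor" where
  "contr g m l x w = (if length w = m then
     (\<Sum>v\<in>words g (2*l). x (w @ v) * (\<Prod>j<l. Cf g (v ! (2*j)) (v ! (2*j+1)))) else 0)"

text \<open>pi(x) = x - (C(x)/C(omega0)) omega0, applied to the first / last two factors\<close>
definition piF :: "nat \<Rightarrow> 'a::field tensor \<Rightarrow> 'a tensor" where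
  "piF g x w = x w - (1 / of_nat (2*g)) * omega0 g (take 2 w) *
     (\<Sum>i<2*g. \<Sum>j<2*g. Cf g i j * x (i # j # drop 2 w))"

definition piL :: "nat \<Rightarrow> 'a::field tensor \<Rightarrow> 'a tensor" where
  "piL g x w = x w - (1 / of_nat (2*g)) * omega0 g (drop (length w - 2) w) *
     (\<Sum>i<2*g. \<Sum>j<2*g. Cf g i j * x (take (length w - 2) w @ [i, j]))"

definition pipi :: "nat \<Rightarrow> nat \<Rightarrow> 'a::field tensor \<Rightarrow> 'a tensor" where
  "pipi g m x w = (if length w = m then piL g (piF g x) w else 0)"

definition Phi :: "nat \<Rightarrow> nat \<Rightarrow> (nat \<Rightarrow> nat \<Rightarrow> 'a::field) \<Rightarrow> 'a tensor" where
  "Phi g m u w = (\<Sum>k\<in>{k. 1 \<le> k \<and> k \<le> m - 1 \<and> odd k}.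
     (-1) ^ ((k - 1) div 2) *
       (Cont g (map u [m-k+1..<m]) *
          tprod [vt (u m), tpow (omega0 g) ((k - 1) div 2), vprod u 1 (m - k)] w
      + Cont g (map u [2..<k+1]) *
          tprod [vprod u (k+1) m, tpow (omega0 g) ((k - 1) div 2), vt (u 1)] w))"

end

theory Submission
  imports Defs "HOL-Library.Function_Algebras"
begin

text \<open>
  Put X = u_1 ... u_m omega_0^l, of degree N = m + 2l. Then |X| is the sum of the N
  rotations of X, and 1 (x) C^l can be applied to each rotation separately. Each of the l
  contractions pairs two neighbouring factors, and there are three kinds of pairs: two
  vectors v w give C(v w), a whole omega_0 gives C(omega_0) = 2g, and omega_0 followed by a
  vector x gives -x (the snake identity). The identity rotation gives (2g)^l u_1 ... u_m.
  A rotation by an odd k <= m - 2 cuts one omega_0 into two halves, which the contractions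
  join again around u_m; this gives the first summand of Phi(u), with sign
  (-1)^l (-1)^((k-1)/2). The rotation by N - k moves u_(k+1) ... u_m to the front and gives
  the second summand. Every other rotation leaves a whole omega_0 in the first two or in
  the last two slots of the contracted tensor, and pi kills it there because
  C(omega_0) is not 0.
\<close>

section \<open>Multiplication in the tensor algebra\<close>

definition homogeneous :: "nat \<Rightarrow> 'a::field tensor \<Rightarrow> bool" where
  "homogeneous n x \<longleftrightarrow> (\<forall>w. length w \<noteq> n \<longrightarrow> x w = 0)"

definition tscale :: "'a::field \<Rightarrow> 'a tensor \<Rightarrow> 'a tensor" where
  "tscale c x = (\<lambda>w. c * x w)"

lemma sum_fun_apply: "(\<Sum>i\<in>I. f i) x = (\<Sum>i\<in>I. f i x)"
  by (induction I rule: infinite_finite_induct) auto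

lemma funpow_add_apply: "(f ^^ (i + j)) x = (f ^^ i) ((f ^^ j) x)"
  by (simp add: funpow_add)

lemma tmul_assoc: "tmul (tmul x y) z = tmul x (tmul y z)"
proof (rule ext)
  fix w :: "nat list"
  let ?n = "length w"
  let ?f = "\<lambda>j i. x (take j w) * y (take i (drop j w)) * z (drop (j + i) w)"
  have "tmul (tmul x y) z w = (\<Sum>k\<le>?n. \<Sum>j\<le>k. ?f j (k - j))"
    unfolding tmul_def sum_distrib_right
    by (intro sum.cong) (auto simp: min_def drop_take)
  also have "\<dots> = (\<Sum>(j, i)\<in>{(j, i). j + i \<le> ?n}. ?f j i)"
    by (rule sum.triangle_reindex_eq[symmetric])
  also have "{(j, i). j + i \<le> ?n} = Sigma {..?n} (\<lambda>j. {..?n - j})"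
    by auto
  also have "(\<Sum>(j, i)\<in>Sigma {..?n} (\<lambda>j. {..?n - j}). ?f j i) = (\<Sum>j\<le>?n. \<Sum>i\<le>?n - j. ?f j i)"
    by (rule sum.Sigma[symmetric]) auto
  also have "\<dots> = tmul x (tmul y z) w"
    unfolding tmul_def sum_distrib_left by (simp add: mult.assoc add.commute)
  finally show "tmul (tmul x y) z w = tmul x (tmul y z) w" .
qed

lemma tmul_homogeneous_left:
  assumes "homogeneous n x"
  shows "tmul x y w = (if n \<le> length w then x (take n w) * y (drop n w) else 0)"
proof -
  have "tmul x y w = (\<Sum>k\<le>length w. if k = n then x (take k w) * y (drop k w) else 0)"
    unfolding tmul_def using assms by (intro sum.cong) (auto simp: homogeneous_def min_def)
  then show ?thesis by simp
qed

lemma tmul_homogeneous_right: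
  assumes "homogeneous n y"
  shows "tmul x y w =
    (if n \<le> length w then x (take (length w - n) w) * y (drop (length w - n) w) else 0)"
proof -
  have "tmul x y w = (\<Sum>k\<le>length w. if k = length w - n then x (take k w) * y (drop k w) else 0)"
    unfolding tmul_def using assms by (intro sum.cong) (auto simp: homogeneous_def)
  then show ?thesis using assms by (auto simp: homogeneous_def)
qed

lemma homogeneous_tmul: "homogeneous a x \<Longrightarrow> homogeneous b y \<Longrightarrow> homogeneous (a + b) (tmul x y)"
  by (auto simp: homogeneous_def tmul_homogeneous_left)

lemma homogeneous_sum:
  "(\<And>i. i \<in> I \<Longrightarrow> homogeneous n (f i)) \<Longrightarrow> homogeneous n (\<Sum>i\<in>I. f i)"
  by (simp add: homogeneous_def sum_fun_apply)

lemma homogeneous_tunit: "homogeneous 0 tunit"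
  by (simp add: homogeneous_def tunit_def)

lemma tmul_tunit_right [simp]: "tmul x tunit = x"
  by (rule ext) (simp add: tmul_homogeneous_right[OF homogeneous_tunit] tunit_def)

lemma tmul_tunit_left [simp]: "tmul tunit x = x"
  by (rule ext) (simp add: tmul_homogeneous_left[OF homogeneous_tunit] tunit_def)

lemma tprod_Nil [simp]: "tprod [] = tunit"
  by (simp add: tprod_def)

lemma tprod_Cons [simp]: "tprod (x # xs) = tmul x (tprod xs)"
  by (simp add: tprod_def)

lemma tprod_append: "tprod (xs @ ys) = tmul (tprod xs) (tprod ys)"
  by (induction xs) (simp_all add: tmul_assoc)

lemma tpow_0 [simp]: "tpow x 0 = tunit"
  by (simp add: tpow_def)

lemma tpow_Suc: "tpow x (Suc n) = tmul x (tpow x n)"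
  by (simp add: tpow_def)

lemma tpow_add: "tpow x (a + b) = tmul (tpow x a) (tpow x b)"
  by (simp add: tpow_def replicate_add tprod_append)

lemma tpow_Suc_right: "tpow x (Suc n) = tmul (tpow x n) x"
  using tpow_add[of x n 1] by (simp add: tpow_Suc)

lemma homogeneous_tpow: "homogeneous d x \<Longrightarrow> homogeneous (d * n) (tpow x n)"
  by (induction n) (simp_all add: homogeneous_tunit tpow_Suc homogeneous_tmul)

lemma homogeneous_vt: "homogeneous 1 (vt x)"
  by (auto simp: homogeneous_def vt_def split: list.splits)

lemma homogeneous_vt_vt: "homogeneous 2 (tmul (vt x) (vt y))"
  by (metis homogeneous_tmul homogeneous_vt one_add_one)

lemma homogeneous_omega0: "homogeneous 2 (omega0 g)"
  by (auto simp: homogeneous_def omega0_def)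

lemma omega0_eq_0: "length v \<noteq> 2 \<Longrightarrow> omega0 g v = 0"
  using homogeneous_omega0 by (auto simp: homogeneous_def)

lemma homogeneous_omega0_tpow: "homogeneous (2 * n) (tpow (omega0 g) n)"
  using homogeneous_tpow[OF homogeneous_omega0] .

lemma vprod_single [simp]: "vprod u i i = vt (u i)"
  by (simp add: vprod_def)

lemma vprod_split:
  assumes "i \<le> Suc k" "k \<le> j"
  shows "vprod u i j = tmul (vprod u i k) (vprod u (Suc k) j)"
proof -
  have "[i..<Suc j] = [i..<Suc k] @ [Suc k..<Suc j]"
    using assms upt_add_eq_append[of i "Suc k" "j - k"] by simp
  then show ?thesis by (simp add: vprod_def tprod_append)
qed

lemma homogeneous_vprod: "homogeneous (Suc j - i) (vprod u i j)"
proof -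
  have "homogeneous (length xs) (tprod (map (\<lambda>k. vt (u k)) xs))" for xs :: "nat list"
    by (induction xs) (simp_all add: homogeneous_tunit homogeneous_tmul[OF homogeneous_vt, simplified])
  from this[of "[i..<Suc j]"] show ?thesis by (simp add: vprod_def del: upt_Suc)
qed

lemma vprod_eq_tprod_map: "vprod u i j = tprod (map vt (map u [i..<Suc j]))"
  by (simp add: vprod_def comp_def)

lemma tscale_apply: "tscale c x w = c * x w"
  by (simp add: tscale_def)

lemma tscale_0_right [simp]: "tscale c 0 = 0"
  by (simp add: tscale_def zero_fun_def)

lemma tscale_add: "tscale c (x + y) = tscale c x + tscale c y"
  by (rule ext) (simp add: tscale_def distrib_left)

lemma tscale_tscale [simp]: "tscale a (tscale b x) = tscale (a * b) x"
  by (simp add: tscale_def mult.assoc)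

lemma tscale_sum: "tscale c (\<Sum>i\<in>I. f i) = (\<Sum>i\<in>I. tscale c (f i))"
  by (rule ext) (simp add: tscale_def sum_fun_apply sum_distrib_left)

lemma tmul_tscale_left: "tmul (tscale c x) y = tscale c (tmul x y)"
  by (rule ext) (simp add: tmul_def tscale_def sum_distrib_left mult.assoc)

lemma tmul_tscale_right: "tmul x (tscale c y) = tscale c (tmul x y)"
  by (rule ext) (simp add: tmul_def tscale_def sum_distrib_left mult.left_commute)

lemma tmul_sum_left: "tmul (\<Sum>i\<in>I. f i) y = (\<Sum>i\<in>I. tmul (f i) y)"
  by (rule ext) (simp add: tmul_def sum_fun_apply sum_distrib_right sum.swap[of _ I])

lemma tmul_sum_right: "tmul x (\<Sum>i\<in>I. f i) = (\<Sum>i\<in>I. tmul x (f i))"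
  by (rule ext) (simp add: tmul_def sum_fun_apply sum_distrib_left sum.swap[of _ I])

lemma vt_sum: "vt (\<lambda>j. \<Sum>i\<in>I. f i j) = (\<Sum>i\<in>I. vt (f i))"
  by (rule ext) (simp add: vt_def sum_fun_apply split: list.splits)

lemma vt_scale: "vt (\<lambda>j. c * x j) = tscale c (vt x)"
  by (rule ext) (simp add: vt_def tscale_def split: list.splits)

section \<open>The pairing C and the tensor omega_0\<close>

definition in_V :: "nat \<Rightarrow> (nat \<Rightarrow> 'a::field) \<Rightarrow> bool" where
  "in_V g x \<longleftrightarrow> (\<forall>i. 2 * g \<le> i \<longrightarrow> x i = 0)"

definition unit_vec :: "nat \<Rightarrow> nat \<Rightarrow> 'a::field" where
  "unit_vec i j = (if j = i then 1 else 0)"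

lemma in_V_unit_vec: "i < 2 * g \<Longrightarrow> in_V g (unit_vec i)"
  by (simp add: in_V_def unit_vec_def)

lemma Cf_eq_0: "2 * g \<le> a \<or> 2 * g \<le> b \<Longrightarrow> Cf g a b = 0"
  by (auto simp: Cf_def)

lemma sum_Cf_row:
  "(\<Sum>a<2*g. Cf g c a * f a) = (if c < g then f (g + c) else if c < 2*g then - f (c - g) else 0)"
proof -
  have "(\<Sum>a<2*g. Cf g c a * f a) = (\<Sum>a<2*g. (if a = g + c then (if c < g then f a else 0) else 0)
      + (if a = c - g then (if g \<le> c \<and> c < 2*g then - f a else 0) else 0))"
    by (intro sum.cong) (auto simp: Cf_def)
  then show ?thesis by (auto simp: sum.distrib)
qed

lemma Cf_square: "(\<Sum>a<2*g. Cf g c a * Cf g a b) = (if c = b \<and> c < 2*g then -1 else (0::'a::field))"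
  by (simp add: sum_Cf_row) (auto simp: Cf_def)

lemma omega0_Cons_Cons: "omega0 g [a, b] = Cf g a b"
  by (auto simp: omega0_def Cf_def)

lemma omega0_eq_sum: "(omega0 g :: 'a::field tensor) = (\<Sum>i<2*g. tmul (vt (unit_vec i)) (vt (Cf g i)))"
proof (rule ext)
  fix w :: "nat list"
  have hom: "homogeneous 2 (\<Sum>i<2*g. tmul (vt (unit_vec i)) (vt (Cf g i)) :: 'a tensor)"
    by (intro homogeneous_sum homogeneous_vt_vt)
  show "(omega0 g w :: 'a) = (\<Sum>i<2*g. tmul (vt (unit_vec i)) (vt (Cf g i))) w"
  proof (cases "length w = 2")
    case True
    then obtain a b where "w = [a, b]" by (auto simp: length_Suc_conv numeral_2_eq_2)
    then show ?thesis
      by (simp add: sum_fun_apply tmul_homogeneous_left[OF homogeneous_vt] vt_def unit_vec_def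
          omega0_Cons_Cons Cf_eq_0 if_distrib[of "\<lambda>t. t * _"] cong: if_cong)
  next
    case False
    then show ?thesis
      using hom[unfolded homogeneous_def, rule_format, OF False]
        homogeneous_omega0[of g, unfolded homogeneous_def, rule_format, OF False] by (simp only:)
  qed
qed

lemma sum_unit_vec:
  assumes "in_V g x"
  shows "(\<lambda>j. \<Sum>i<2*g. x i * unit_vec i j) = x"
proof (rule ext)
  fix j
  have "(\<Sum>i<2*g. x i * unit_vec i j) = (\<Sum>i<2*g. if i = j then x j else 0)"
    by (intro sum.cong) (auto simp: unit_vec_def)
  then show "(\<Sum>i<2*g. x i * unit_vec i j) = x j" using assms by (simp add: in_V_def)
qed

lemma Cbil_Cf_left:
  assumes "in_V g x"
  shows "Cbil g (Cf g c) x = - x c"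
proof -
  have "Cbil g (Cf g c) x = (\<Sum>a<2*g. \<Sum>b<2*g. Cf g c a * Cf g a b * x b)"
    by (simp add: Cbil_def mult_ac)
  also have "\<dots> = (\<Sum>b<2*g. (\<Sum>a<2*g. Cf g c a * Cf g a b) * x b)"
    by (subst sum.swap) (simp add: sum_distrib_right)
  also have "\<dots> = (\<Sum>b<2*g. if b = c then (if c < 2*g then - x c else 0) else 0)"
    by (intro sum.cong) (auto simp: Cf_square)
  finally show ?thesis using assms by (simp add: in_V_def)
qed

lemma sum_Cbil_unit_vec_Cf:
  assumes "in_V g x"
  shows "(\<Sum>i<2*g. Cbil g x (unit_vec i) * Cf g i j) = - x j"
proof -
  have "Cbil g x (unit_vec i) = (\<Sum>a<2*g. Cf g a i * x a)" if "i < 2*g" for i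
  proof -
    have "(\<Sum>b<2*g. Cf g a b * x a * unit_vec i b) = Cf g a i * x a" for a
      using that by (simp add: unit_vec_def if_distrib[of "\<lambda>t. _ * t"] cong: if_cong)
    then show ?thesis by (simp add: Cbil_def)
  qed
  then have "(\<Sum>i<2*g. Cbil g x (unit_vec i) * Cf g i j)
      = (\<Sum>i<2*g. \<Sum>a<2*g. Cf g a i * Cf g i j * x a)"
    by (simp add: sum_distrib_left sum_distrib_right mult_ac)
  also have "\<dots> = (\<Sum>a<2*g. (\<Sum>i<2*g. Cf g a i * Cf g i j) * x a)"
    by (subst sum.swap) (simp add: sum_distrib_right)
  also have "\<dots> = (\<Sum>a<2*g. if a = j then (if j < 2*g then - x j else 0) else 0)"
    by (intro sum.cong) (auto simp: Cf_square)
  finally show ?thesis using assms by (simp add: in_V_def)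
qed

section \<open>Contracting the last two factors\<close>

definition contract_last :: "nat \<Rightarrow> 'a::field tensor \<Rightarrow> 'a tensor" where
  "contract_last g x w = (\<Sum>a<2*g. \<Sum>b<2*g. Cf g a b * x (w @ [a, b]))"

lemma sum_words_Suc: "(\<Sum>v\<in>words g (Suc n). f v) = (\<Sum>a<2*g. \<Sum>v\<in>words g n. f (a # v))"
proof -
  have words: "words g (Suc n) = (\<lambda>(a, v). a # v) ` ({..<2*g} \<times> words g n)"
    by (auto simp: words_def length_Suc_conv image_iff)
  have "inj_on (\<lambda>(a, v). a # v) ({..<2*g} \<times> words g n)"
    by (auto simp: inj_on_def)
  then show ?thesis
    by (simp add: words sum.reindex sum.cartesian_product split_def)
qed

lemma sum_words_eq_contract_last_pow:
  "(\<Sum>v\<in>words g (2*l). x (w @ v) * (\<Prod>j<l. Cf g (v ! (2*j)) (v ! (2*j+1))))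
    = (contract_last g ^^ l) x w"
proof (induction l arbitrary: w)
  case 0
  have "words g 0 = {[]}" by (auto simp: words_def)
  then show ?case by simp
next
  case (Suc l)
  have nth: "(a # b # v) ! (2 * Suc j) = v ! (2 * j)" "(a # b # v) ! (2 * Suc j + 1) = v ! (2 * j + 1)"
    for a b :: nat and v j
    by (simp_all add: numeral_2_eq_2)
  have "(\<Sum>v\<in>words g (2 * Suc l). x (w @ v) * (\<Prod>j<Suc l. Cf g (v ! (2*j)) (v ! (2*j+1))))
     = (\<Sum>a<2*g. \<Sum>b<2*g. \<Sum>v\<in>words g (2*l).
          x ((w @ [a, b]) @ v) * (\<Prod>j<l. Cf g (v ! (2*j)) (v ! (2*j+1))) * Cf g a b)"
    by (simp add: sum_words_Suc prod.lessThan_Suc_shift nth mult_ac del: prod.lessThan_Suc)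
  also have "\<dots> = (\<Sum>a<2*g. \<Sum>b<2*g. Cf g a b * (contract_last g ^^ l) x (w @ [a, b]))"
    by (simp add: Suc.IH[symmetric] sum_distrib_left mult_ac)
  also have "\<dots> = (contract_last g ^^ Suc l) x w"
    by (simp add: contract_last_def[of g "(contract_last g ^^ l) x"])
  finally show ?case .
qed

lemma contr_eq_contract_last_pow:
  "contr g m l x w = (if length w = m then (contract_last g ^^ l) x w else 0)"
  unfolding contr_def sum_words_eq_contract_last_pow ..

lemma contract_last_tscale: "contract_last g (tscale c x) = tscale c (contract_last g x)"
  by (rule ext) (simp add: contract_last_def tscale_def sum_distrib_left mult_ac)

lemma contract_last_pow_tscale:
  "(contract_last g ^^ j) (tscale c x) = tscale c ((contract_last g ^^ j) x)"
  by (induction j) (simp_all add: contract_last_tscale)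

lemma contract_last_sum: "contract_last g (\<Sum>i\<in>I. f i) = (\<Sum>i\<in>I. contract_last g (f i))"
  by (rule ext) (simp add: contract_last_def sum_fun_apply sum_distrib_left sum.swap[of _ I])

lemma contract_last_pow_sum:
  "(contract_last g ^^ j) (\<Sum>i\<in>I. f i) = (\<Sum>i\<in>I. (contract_last g ^^ j) (f i))"
  by (induction j) (simp_all add: contract_last_sum)

lemma homogeneous_contract_last_pow:
  "homogeneous (n + 2 * j) x \<Longrightarrow> homogeneous n ((contract_last g ^^ j) x)"
proof (induction j arbitrary: n)
  case (Suc j)
  then have "homogeneous (n + 2) ((contract_last g ^^ j) x)"
    by (simp add: algebra_simps)
  then show ?case by (auto simp: homogeneous_def contract_last_def[of g "(contract_last g ^^ j) x"])
qed simp

lemma contract_last_tmul_homogeneous2: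
  "homogeneous 2 q \<Longrightarrow> contract_last g (tmul p q) = tscale (contract_last g q []) p"
  by (rule ext) (simp add: contract_last_def tmul_homogeneous_right tscale_def sum_distrib_left mult_ac)

lemma contract_last_pow_tmul_left:
  assumes P: "homogeneous p P" and Y: "homogeneous q Y" and "2 * j \<le> q"
  shows "(contract_last g ^^ j) (tmul P Y) = tmul P ((contract_last g ^^ j) Y)"
  using \<open>2 * j \<le> q\<close>
proof (induction j)
  case (Suc j)
  define Z where "Z = (contract_last g ^^ j) Y"
  have Z: "homogeneous (q - 2 * j) Z"
    unfolding Z_def using Suc.prems Y by (intro homogeneous_contract_last_pow) simp
  have step: "contract_last g (tmul P Z) w = tmul P (contract_last g Z) w" for w
  proof (cases "p \<le> length w")
    case False
    then have "tmul P Z (w @ [a, b]) = 0" for a b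
      using Z Suc.prems by (auto simp: tmul_homogeneous_left[OF P] homogeneous_def)
    then show ?thesis using False by (simp add: contract_last_def tmul_homogeneous_left[OF P])
  qed (simp add: contract_last_def tmul_homogeneous_left[OF P] sum_distrib_left mult_ac)
  have "(contract_last g ^^ Suc j) (tmul P Y) = contract_last g (tmul P Z)"
    using Suc by (simp add: Z_def)
  also have "\<dots> = tmul P (contract_last g Z)"
    using step by (rule ext)
  finally show ?case by (simp add: Z_def)
qed simp

lemma contract_last_vt_vt: "contract_last g (tmul (vt x) (vt y)) [] = Cbil g x y"
  by (simp add: contract_last_def Cbil_def tmul_homogeneous_left[OF homogeneous_vt] vt_def mult_ac)

lemma contract_last_omega0: "contract_last g (omega0 g) [] = of_nat (2*g)"
proof -
  have "(\<Sum>b<2*g. Cf g a b * Cf g a b) = (1::'a)" if "a < 2*g" for a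
    using that by (subst sum_Cf_row) (auto simp: Cf_def)
  then show ?thesis by (simp add: contract_last_def omega0_Cons_Cons)
qed

lemma Cont_append_pair: "even (length ys) \<Longrightarrow> Cont g (ys @ [a, b]) = Cont g ys * Cbil g a b"
  by (induction g ys rule: Cont.induct) (auto simp: mult_ac)

lemma contract_last_pow_vts:
  assumes "length ys = 2 * j"
  shows "(contract_last g ^^ j) (tmul P (tprod (map vt ys))) = tscale (Cont g ys) P"
  using assms
proof (induction j arbitrary: ys)
  case 0
  then show ?case by (simp add: tscale_def)
next
  case (Suc j)
  obtain zs a b where ys: "ys = zs @ [a, b]"
  proof (cases ys rule: rev_exhaust)
    case (snoc ys' b)
    with Suc.prems show ?thesis
      by (cases ys' rule: rev_exhaust) (auto intro: that)
  qed (use Suc.prems in simp)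
  then have len: "length zs = 2 * j" using Suc.prems by simp
  have "tmul P (tprod (map vt ys)) = tmul (tmul P (tprod (map vt zs))) (tmul (vt a) (vt b))"
    by (simp add: ys tprod_append tmul_assoc)
  then have "(contract_last g ^^ Suc j) (tmul P (tprod (map vt ys)))
      = (contract_last g ^^ j) (tscale (Cbil g a b) (tmul P (tprod (map vt zs))))"
    by (simp add: funpow_Suc_right contract_last_tmul_homogeneous2[OF homogeneous_vt_vt]
        contract_last_vt_vt del: funpow.simps)
  also have "\<dots> = tscale (Cbil g a b * Cont g zs) P"
    by (simp add: contract_last_pow_tscale Suc.IH[OF len])
  finally show ?case using len by (simp add: ys Cont_append_pair mult.commute)
qed

lemma contract_last_pow_vprod:
  "Suc b - a = 2 * j \<Longrightarrow>
    (contract_last g ^^ j) (tmul P (vprod u a b)) = tscale (Cont g (map u [a..<Suc b])) P"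
  unfolding vprod_eq_tprod_map by (rule contract_last_pow_vts) (simp del: upt_Suc)

lemma contract_last_pow_omega0:
  "j \<le> n \<Longrightarrow> (contract_last g ^^ j) (tmul P (tpow (omega0 g) n))
    = tscale (of_nat (2*g) ^ j) (tmul P (tpow (omega0 g) (n - j)))"
proof (induction j arbitrary: n)
  case 0
  then show ?case by (simp add: tscale_def)
next
  case (Suc j)
  then obtain n' where n: "n = Suc n'" by (cases n) auto
  have "tmul P (tpow (omega0 g) n) = tmul (tmul P (tpow (omega0 g) n')) (omega0 g)"
    by (simp add: n tpow_Suc_right tmul_assoc)
  then have "(contract_last g ^^ Suc j) (tmul P (tpow (omega0 g) n))
      = (contract_last g ^^ j) (tscale (of_nat (2*g)) (tmul P (tpow (omega0 g) n')))"
    by (simp add: funpow_Suc_right contract_last_tmul_homogeneous2[OF homogeneous_omega0]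
        contract_last_omega0 del: funpow.simps)
  then show ?case using Suc by (simp add: n contract_last_pow_tscale mult.commute)
qed

lemma contract_last_omega0_vt:
  assumes "in_V g x"
  shows "contract_last g (tmul P (tmul (omega0 g) (vt x))) = tscale (-1) (tmul P (vt x))"
proof -
  have "tmul P (tmul (omega0 g) (vt x))
      = (\<Sum>i<2*g. tmul (tmul P (vt (unit_vec i))) (tmul (vt (Cf g i)) (vt x)))"
    by (simp add: omega0_eq_sum tmul_sum_left tmul_sum_right tmul_assoc)
  then have "contract_last g (tmul P (tmul (omega0 g) (vt x)))
      = (\<Sum>i<2*g. tscale (- x i) (tmul P (vt (unit_vec i))))"
    by (simp add: contract_last_sum contract_last_tmul_homogeneous2[OF homogeneous_vt_vt]
        contract_last_vt_vt Cbil_Cf_left[OF assms])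
  also have "\<dots> = tmul P (vt (\<lambda>j. \<Sum>i<2*g. - x i * unit_vec i j))"
    by (simp only: vt_sum vt_scale tmul_sum_right tmul_tscale_right)
  also have "(\<lambda>j. \<Sum>i<2*g. - x i * unit_vec i j) = (\<lambda>j. -1 * x j)"
    using sum_unit_vec[OF assms] by (simp add: fun_eq_iff sum_negf)
  finally show ?thesis by (simp only: vt_scale tmul_tscale_right)
qed

lemma contract_last_pow_omega0_vt:
  assumes "in_V g x"
  shows "j \<le> n \<Longrightarrow> (contract_last g ^^ j) (tmul P (tmul (tpow (omega0 g) n) (vt x)))
    = tscale ((-1) ^ j) (tmul P (tmul (tpow (omega0 g) (n - j)) (vt x)))"
proof (induction j arbitrary: n)
  case 0
  then show ?case by (simp add: tscale_def)
next
  case (Suc j)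
  then obtain n' where n: "n = Suc n'" by (cases n) auto
  have "tmul P (tmul (tpow (omega0 g) n) (vt x))
      = tmul (tmul P (tpow (omega0 g) n')) (tmul (omega0 g) (vt x))"
    by (simp add: n tpow_Suc_right tmul_assoc)
  then have "(contract_last g ^^ Suc j) (tmul P (tmul (tpow (omega0 g) n) (vt x)))
      = (contract_last g ^^ j) (tscale (-1) (tmul P (tmul (tpow (omega0 g) n') (vt x))))"
    by (simp add: funpow_Suc_right contract_last_omega0_vt[OF assms] del: funpow.simps)
      (simp add: tmul_assoc)
  then show ?case using Suc by (simp add: n contract_last_pow_tscale)
qed

text \<open>The two halves of a cut omega_0 are joined again by \<Sum>_i C(x, e_i) C(e_i, -) = -x.\<close>

lemma contract_last_split_omega0:
  assumes "in_V g x"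
  shows "contract_last g (\<Sum>i<2*g. tmul (vt (Cf g i)) (tmul Y (tmul (vt x) (vt (unit_vec i)))))
    = tscale (-1) (tmul (vt x) Y)"
proof -
  have "tmul (vt (Cf g i)) (tmul Y (tmul (vt x) (vt (unit_vec i))))
      = tmul (tmul (vt (Cf g i)) Y) (tmul (vt x) (vt (unit_vec i)))" for i
    by (simp add: tmul_assoc)
  then have "contract_last g (\<Sum>i<2*g. tmul (vt (Cf g i)) (tmul Y (tmul (vt x) (vt (unit_vec i)))))
      = (\<Sum>i<2*g. tscale (Cbil g x (unit_vec i)) (tmul (vt (Cf g i)) Y))"
    by (simp add: contract_last_sum contract_last_tmul_homogeneous2[OF homogeneous_vt_vt]
        contract_last_vt_vt)
  also have "\<dots> = tmul (vt (\<lambda>j. \<Sum>i<2*g. Cbil g x (unit_vec i) * Cf g i j)) Y"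
    by (simp add: vt_sum vt_scale tmul_sum_left tmul_tscale_left)
  also have "\<dots> = tmul (vt (\<lambda>j. -1 * x j)) Y"
    by (simp add: sum_Cbil_unit_vec_Cf[OF assms])
  finally show ?thesis by (simp only: vt_scale tmul_tscale_left)
qed

section \<open>Rotations and the projections pi\<close>

definition rot :: "nat \<Rightarrow> 'a::field tensor \<Rightarrow> 'a tensor" where
  "rot s x w = x (rotate s w)"

lemma rot_0 [simp]: "rot 0 x = x"
  by (rule ext) (simp add: rot_def)

lemma rot_sum: "rot s (\<Sum>i\<in>I. f i) = (\<Sum>i\<in>I. rot s (f i))"
  by (rule ext) (simp add: rot_def sum_fun_apply)

lemma rot_tmul:
  assumes A: "homogeneous a A" and B: "homogeneous b B" and "0 < a"
  shows "rot b (tmul A B) = tmul B A"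
proof (rule ext)
  fix w :: "nat list"
  show "rot b (tmul A B) w = tmul B A w"
  proof (cases "length w = a + b")
    case True
    then have "rotate b w = drop b w @ take b w"
      using \<open>0 < a\<close> by (simp add: rotate_drop_take)
    with True show ?thesis
      by (simp add: rot_def tmul_homogeneous_left[OF A] tmul_homogeneous_left[OF B] mult.commute)
  next
    case False
    then show ?thesis
      using homogeneous_tmul[OF A B] homogeneous_tmul[OF B A]
      by (simp add: rot_def homogeneous_def add.commute)
  qed
qed

lemma cyc_eq_sum_rot:
  assumes "homogeneous N x"
  shows "cyc x = (\<Sum>s<N. rot s x)"
proof (rule ext)
  fix w :: "nat list"
  show "cyc x w = (\<Sum>s<N. rot s x) w"
    using assms by (cases "length w = N") (simp_all add: cyc_def rot_def sum_fun_apply homogeneous_def)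
qed

lemma piF_add: "piF g (x + y) = piF g x + piF g y"
  by (rule ext) (simp add: piF_def sum.distrib algebra_simps)

lemma piF_tscale: "piF g (tscale c x) = tscale c (piF g x)"
  by (rule ext) (simp add: piF_def tscale_def sum_distrib_left algebra_simps)

lemma piF_sum: "piF g (\<Sum>i\<in>I. f i) = (\<Sum>i\<in>I. piF g (f i))"
  by (rule ext) (simp add: piF_def sum_fun_apply sum_subtractf sum_distrib_left sum.swap[of _ I])

lemma piL_add: "piL g (x + y) = piL g x + piL g y"
  by (rule ext) (simp add: piL_def sum.distrib algebra_simps)

lemma piL_tscale: "piL g (tscale c x) = tscale c (piL g x)"
  by (rule ext) (simp add: piL_def tscale_def sum_distrib_left algebra_simps)

lemma piL_sum: "piL g (\<Sum>i\<in>I. f i) = (\<Sum>i\<in>I. piL g (f i))"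
  by (rule ext) (simp add: piL_def sum_fun_apply sum_subtractf sum_distrib_left sum.swap[of _ I])

lemma pipi_add: "pipi g m (x + y) = pipi g m x + pipi g m y"
  by (rule ext) (simp add: pipi_def piF_add piL_add)

lemma pipi_tscale: "pipi g m (tscale c x) = tscale c (pipi g m x)"
  by (rule ext) (simp add: pipi_def piF_tscale piL_tscale tscale_apply)

lemma pipi_sum: "pipi g m (\<Sum>i\<in>I. f i) = (\<Sum>i\<in>I. pipi g m (f i))"
  by (rule ext) (simp add: pipi_def piF_sum piL_sum sum_fun_apply)

lemma pipi_cong:
  assumes "2 \<le> m" and "\<And>w. length w = m \<Longrightarrow> x w = y w"
  shows "pipi g m x = pipi g m y"
proof -
  have "piF g x w = piF g y w" if "length w = m" for w
    unfolding piF_def using that assms by (auto intro!: sum.cong)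
  then show ?thesis
    unfolding pipi_def piL_def using assms(1) by (auto intro!: sum.cong)
qed

lemma pipi_contr: "2 \<le> m \<Longrightarrow> pipi g m (contr g m l x) = pipi g m ((contract_last g ^^ l) x)"
  by (rule pipi_cong) (simp_all add: contr_eq_contract_last_pow)

lemma homogeneous_piF:
  assumes "homogeneous d Z"
  shows "homogeneous d (piF g Z)"
  unfolding homogeneous_def
proof (intro allI impI)
  fix w :: "nat list"
  assume "length w \<noteq> d"
  then have "Z w = 0" "omega0 g (take 2 w) = 0 \<or> (\<forall>i j. Z (i # j # drop 2 w) = 0)"
    using assms by (cases "2 \<le> length w"; auto simp: homogeneous_def omega0_def)+
  then show "piF g Z w = 0" by (auto simp: piF_def)
qed

lemma piF_tmul:
  assumes Z: "homogeneous d Z" and "2 \<le> d"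
  shows "piF g (tmul Z Y) = tmul (piF g Z) Y"
proof (rule ext)
  fix w :: "nat list"
  obtain d' where d: "d = d' + 2"
    using \<open>2 \<le> d\<close> by (metis le_add_diff_inverse2)
  have take: "take d (i # j # drop 2 w) = i # j # drop 2 (take d w)" for i j
    by (simp add: d numeral_2_eq_2 drop_take)
  have drop: "drop d (i # j # drop 2 w) = drop d w" for i j
    by (simp add: d numeral_2_eq_2)
  show "piF g (tmul Z Y) w = tmul (piF g Z) Y w"
  proof (cases "d \<le> length w")
    case True
    then have "length (i # j # drop 2 w) = length w" "take 2 (take d w) = take 2 w" for i j
      using \<open>2 \<le> d\<close> by (simp_all add: min_absorb1)
    with True show ?thesis
      by (simp add: piF_def tmul_homogeneous_left[OF Z] tmul_homogeneous_left[OF homogeneous_piF[OF Z]]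
          take drop sum_distrib_left sum_distrib_right algebra_simps)
  next
    case False
    then have "omega0 g (take 2 w) = 0 \<or> (\<forall>i j. tmul Z Y (i # j # drop 2 w) = 0)"
      by (cases "2 \<le> length w") (auto simp: tmul_homogeneous_left[OF Z] omega0_def)
    then show ?thesis using False
      by (auto simp: piF_def tmul_homogeneous_left[OF Z] tmul_homogeneous_left[OF homogeneous_piF[OF Z]])
  qed
qed

lemma piF_tmul_omega0:
  fixes Z :: "'a::field_char_0 tensor"
  assumes "0 < g"
  shows "piF g (tmul (omega0 g) Z) = 0"
proof (rule ext)
  fix w :: "nat list"
  have "(\<Sum>i<2*g. \<Sum>j<2*g. Cf g i j * tmul (omega0 g) Z (i # j # drop 2 w))
      = contract_last g (omega0 g) [] * Z (drop 2 w)"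
    by (simp add: tmul_homogeneous_left[OF homogeneous_omega0] contract_last_def sum_distrib_left mult_ac)
  then show "piF g (tmul (omega0 g) Z) w = 0 w"
    using assms by (cases "2 \<le> length w")
      (simp_all add: piF_def tmul_homogeneous_left[OF homogeneous_omega0] contract_last_omega0 omega0_eq_0)
qed

lemma piL_tmul_omega0:
  fixes W :: "'a::field_char_0 tensor"
  assumes "0 < g"
  shows "piL g (tmul W (omega0 g)) = 0"
proof (rule ext)
  fix w :: "nat list"
  let ?k = "length w - 2"
  have "(\<Sum>i<2*g. \<Sum>j<2*g. Cf g i j * tmul W (omega0 g) (take ?k w @ [i, j]))
      = contract_last g (omega0 g) [] * W (take ?k w)"
    by (simp add: tmul_homogeneous_right[OF homogeneous_omega0] contract_last_def sum_distrib_left mult_ac)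
  then show "piL g (tmul W (omega0 g)) w = 0 w"
    using assms by (cases "2 \<le> length w")
      (simp_all add: piL_def tmul_homogeneous_right[OF homogeneous_omega0] contract_last_omega0 omega0_eq_0)
qed

lemma pipi_tmul_omega0_left:
  fixes Z :: "'a::field_char_0 tensor"
  shows "0 < g \<Longrightarrow> pipi g m (tmul (omega0 g) Z) = 0"
  by (rule ext) (simp add: pipi_def piF_tmul_omega0 piL_def)

text \<open>The bound 4 \<le> d + 2n keeps the last omega_0 away from the first two slots.\<close>

lemma pipi_tmul_tpow_omega0_right:
  fixes Z :: "'a::field_char_0 tensor"
  assumes "0 < g" and Z: "homogeneous d Z" and "0 < n" and "4 \<le> d + 2 * n"
  shows "pipi g m (tmul Z (tpow (omega0 g) n)) = 0"
proof -
  obtain n' where n: "n = Suc n'"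
    using \<open>0 < n\<close> by (cases n) auto
  then have eq: "tmul Z (tpow (omega0 g) n) = tmul (tmul Z (tpow (omega0 g) n')) (omega0 g)"
    by (simp add: tpow_Suc_right tmul_assoc)
  have "homogeneous (d + 2 * n') (tmul Z (tpow (omega0 g) n'))"
    by (rule homogeneous_tmul[OF Z homogeneous_omega0_tpow])
  then have "piF g (tmul Z (tpow (omega0 g) n)) = tmul (piF g (tmul Z (tpow (omega0 g) n'))) (omega0 g)"
    unfolding eq by (rule piF_tmul) (use assms n in simp)
  then have "piL g (piF g (tmul Z (tpow (omega0 g) n))) = 0"
    using \<open>0 < g\<close> by (simp add: piL_tmul_omega0)
  then show ?thesis by (simp add: pipi_def fun_eq_iff)
qed

section \<open>Contracting the rotations of u_1 ... u_m omega_0^l\<close>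

lemma rot_tmul_omega0:
  assumes A: "homogeneous a A" and "0 < a" and B: "homogeneous b B"
  shows "rot (Suc b) (tmul A (tmul (omega0 g) B))
    = (\<Sum>i<2*g. tmul (vt (Cf g i)) (tmul B (tmul A (vt (unit_vec i)))))"
proof -
  have hA: "homogeneous (Suc a) (tmul A (vt x))" for x
    using homogeneous_tmul[OF A homogeneous_vt] by simp
  have hB: "homogeneous (Suc b) (tmul (vt x) B)" for x
    using homogeneous_tmul[OF homogeneous_vt B] by simp
  have "tmul A (tmul (omega0 g) B)
      = (\<Sum>i<2*g. tmul (tmul A (vt (unit_vec i))) (tmul (vt (Cf g i)) B))"
    by (simp add: omega0_eq_sum tmul_sum_left tmul_sum_right tmul_assoc)
  then have "rot (Suc b) (tmul A (tmul (omega0 g) B))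
      = (\<Sum>i<2*g. tmul (tmul (vt (Cf g i)) B) (tmul A (vt (unit_vec i))))"
    by (simp only: rot_sum rot_tmul[OF hA hB zero_less_Suc])
  then show ?thesis by (simp add: tmul_assoc)
qed

lemma contract_last_pow_rot_odd:
  fixes u :: "nat \<Rightarrow> nat \<Rightarrow> 'a::field"
  assumes "in_V g (u m)" and "r < l" and "0 < m"
  shows "(contract_last g ^^ (l - r)) (rot (Suc (2 * r)) (tmul (vprod u 1 m) (tpow (omega0 g) l)))
    = tscale ((-1) ^ (l - r)) (tmul (vt (u m)) (tmul (tpow (omega0 g) r) (vprod u 1 (m - 1))))"
proof -
  define d where "d = l - Suc r"
  define Y where "Y = tmul (tpow (omega0 g) r) (vprod u 1 (m - 1))"
  have V: "vprod u 1 m = tmul (vprod u 1 (m - 1)) (vt (u m))"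
    using vprod_split[of 1 "m - 1" m u] \<open>0 < m\<close> by simp
  have "tpow (omega0 g) l = tmul (tpow (omega0 g) d) (tmul (omega0 g) (tpow (omega0 g) r) :: 'a tensor)"
    using tpow_add[of "omega0 g" d "Suc r"] \<open>r < l\<close> by (simp add: d_def tpow_Suc)
  then have X: "tmul (vprod u 1 m) (tpow (omega0 g) l)
      = tmul (tmul (vprod u 1 m) (tpow (omega0 g) d)) (tmul (omega0 g) (tpow (omega0 g) r))"
    by (simp add: tmul_assoc)
  have hom: "homogeneous (m + 2 * d) (tmul (vprod u 1 m) (tpow (omega0 g) d) :: 'a tensor)"
    using homogeneous_tmul[OF homogeneous_vprod[of m 1 u] homogeneous_omega0_tpow[of d g]] by simp
  have rot: "rot (Suc (2 * r)) (tmul (vprod u 1 m) (tpow (omega0 g) l))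
      = (\<Sum>i<2*g. tmul (tmul (vt (Cf g i)) (tmul (tpow (omega0 g) r) (vprod u 1 m)))
                     (tmul (tpow (omega0 g) d) (vt (unit_vec i))))"
    using rot_tmul_omega0[OF hom _ homogeneous_omega0_tpow[of r g]] \<open>0 < m\<close>
    unfolding X by (simp add: tmul_assoc)
  have "(contract_last g ^^ d) (rot (Suc (2 * r)) (tmul (vprod u 1 m) (tpow (omega0 g) l)))
      = (\<Sum>i<2*g. tscale ((-1) ^ d)
          (tmul (tmul (vt (Cf g i)) (tmul (tpow (omega0 g) r) (vprod u 1 m))) (vt (unit_vec i))))"
    unfolding rot contract_last_pow_sum
    by (intro sum.cong refl) (simp add: contract_last_pow_omega0_vt[OF in_V_unit_vec])
  also have "\<dots> = tscale ((-1) ^ d)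
      (\<Sum>i<2*g. tmul (vt (Cf g i)) (tmul Y (tmul (vt (u m)) (vt (unit_vec i)))))"
    unfolding V by (simp add: tscale_sum Y_def tmul_assoc)
  finally have "(contract_last g ^^ d) (rot (Suc (2 * r)) (tmul (vprod u 1 m) (tpow (omega0 g) l)))
      = tscale ((-1) ^ d) (\<Sum>i<2*g. tmul (vt (Cf g i)) (tmul Y (tmul (vt (u m)) (vt (unit_vec i)))))" .
  moreover have "l - r = Suc d"
    using \<open>r < l\<close> by (simp add: d_def)
  ultimately show ?thesis
    by (simp add: contract_last_tscale contract_last_split_omega0[OF assms(1)] Y_def)
qed

definition Phi_head :: "nat \<Rightarrow> nat \<Rightarrow> (nat \<Rightarrow> nat \<Rightarrow> 'a::field) \<Rightarrow> nat \<Rightarrow> 'a tensor" where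
  "Phi_head g m u k = tscale (Cont g (map u [m-k+1..<m]))
     (tmul (vt (u m)) (tmul (tpow (omega0 g) ((k - 1) div 2)) (vprod u 1 (m - k))))"

definition Phi_tail :: "nat \<Rightarrow> nat \<Rightarrow> (nat \<Rightarrow> nat \<Rightarrow> 'a::field) \<Rightarrow> nat \<Rightarrow> 'a tensor" where
  "Phi_tail g m u k = tscale (Cont g (map u [2..<k+1]))
     (tmul (vprod u (k+1) m) (tmul (tpow (omega0 g) ((k - 1) div 2)) (vt (u 1))))"

lemma Phi_eq_sum:
  "Phi g m u = (\<Sum>k | 1 \<le> k \<and> k \<le> m - 1 \<and> odd k.
     tscale ((-1) ^ ((k - 1) div 2)) (Phi_head g m u k + Phi_tail g m u k))"
  by (rule ext) (simp add: Phi_def Phi_head_def Phi_tail_def sum_fun_apply tscale_apply algebra_simps)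

lemma contract_last_pow_rot_odd_eq_Phi_head:
  fixes u :: "nat \<Rightarrow> nat \<Rightarrow> 'a::field"
  assumes "in_V g (u m)" and "2 * r + 3 \<le> m" and "r < l"
  shows "(contract_last g ^^ l) (rot (Suc (2 * r)) (tmul (vprod u 1 m) (tpow (omega0 g) l)))
    = tscale ((-1) ^ (l - r)) (Phi_head g m u (Suc (2 * r)))"
proof -
  have vprod: "vprod u 1 (m - 1) = tmul (vprod u 1 (m - Suc (2 * r))) (vprod u (m - 2 * r) (m - 1))"
    using vprod_split[of 1 "m - Suc (2 * r)" "m - 1" u] assms(2) by (simp add: Suc_diff_Suc)
  have "(contract_last g ^^ l) (rot (Suc (2 * r)) (tmul (vprod u 1 m) (tpow (omega0 g) l)))
      = (contract_last g ^^ r) ((contract_last g ^^ (l - r))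
          (rot (Suc (2 * r)) (tmul (vprod u 1 m) (tpow (omega0 g) l))))"
    using \<open>r < l\<close> by (simp add: funpow_add_apply[symmetric])
  also have "\<dots> = tscale ((-1) ^ (l - r)) ((contract_last g ^^ r)
      (tmul (vt (u m)) (tmul (tpow (omega0 g) r) (vprod u 1 (m - 1)))))"
    using assms by (subst contract_last_pow_rot_odd) (simp_all add: contract_last_pow_tscale)
  also have "\<dots> = tscale ((-1) ^ (l - r)) ((contract_last g ^^ r)
      (tmul (tmul (vt (u m)) (tmul (tpow (omega0 g) r) (vprod u 1 (m - Suc (2 * r)))))
            (vprod u (m - 2 * r) (m - 1))))"
    unfolding vprod by (simp add: tmul_assoc)
  also have "\<dots> = tscale ((-1) ^ (l - r)) (Phi_head g m u (Suc (2 * r)))"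
    using assms(2) by (simp add: contract_last_pow_vprod Phi_head_def Suc_diff_Suc)
  finally show ?thesis .
qed

text \<open>This is where 5 \<le> m is used: the surviving tensor u_m omega_0^((m-1)/2) ends with
  omega_0, and the first pi must not reach into it.\<close>

lemma pipi_contract_last_pow_rot_odd_long:
  fixes u :: "nat \<Rightarrow> nat \<Rightarrow> 'a::field_char_0"
  assumes "0 < g" and "in_V g (u m)" and "odd m" and "5 \<le> m" and "m \<le> Suc (2 * r)" and "r < l"
  shows "pipi g m ((contract_last g ^^ l) (rot (Suc (2 * r)) (tmul (vprod u 1 m) (tpow (omega0 g) l)))) = 0"
proof -
  obtain q where m: "m = Suc (2 * q)"
    using \<open>odd m\<close> by (auto elim: oddE)
  have "q \<le> r" "2 \<le> q"
    using assms m by simp_all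
  have "(contract_last g ^^ l) (rot (Suc (2 * r)) (tmul (vprod u 1 m) (tpow (omega0 g) l)))
      = (contract_last g ^^ (r - q)) ((contract_last g ^^ q) ((contract_last g ^^ (l - r))
          (rot (Suc (2 * r)) (tmul (vprod u 1 m) (tpow (omega0 g) l)))))"
    using \<open>q \<le> r\<close> \<open>r < l\<close> by (simp add: funpow_add_apply[symmetric])
  also have "\<dots> = tscale ((-1) ^ (l - r)) ((contract_last g ^^ (r - q)) ((contract_last g ^^ q)
      (tmul (tmul (vt (u m)) (tpow (omega0 g) r)) (vprod u 1 (2 * q)))))"
    using assms m by (subst contract_last_pow_rot_odd) (simp_all add: contract_last_pow_tscale tmul_assoc)
  also have "\<dots> = tscale ((-1) ^ (l - r) * Cont g (map u [1..<m]) * of_nat (2 * g) ^ (r - q))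
      (tmul (vt (u m)) (tpow (omega0 g) q))"
    using \<open>q \<le> r\<close> m
    by (simp add: contract_last_pow_vprod contract_last_pow_tscale contract_last_pow_omega0 mult.assoc)
  finally show ?thesis
    using \<open>2 \<le> q\<close> by (simp add: pipi_tscale pipi_tmul_tpow_omega0_right[OF \<open>0 < g\<close> homogeneous_vt])
qed

lemma pipi_contract_last_pow_rot_even:
  fixes u :: "nat \<Rightarrow> nat \<Rightarrow> 'a::field_char_0"
  assumes "0 < g" and "0 < r" and "r \<le> l" and "2 \<le> m"
  shows "pipi g m ((contract_last g ^^ l) (rot (2 * r) (tmul (vprod u 1 m) (tpow (omega0 g) l)))) = 0"
proof -
  define A where "A = tmul (vprod u 1 m) (tpow (omega0 g) (l - r))"
  have A: "homogeneous (m + 2 * (l - r)) A"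
    using homogeneous_tmul[OF homogeneous_vprod[of m 1 u] homogeneous_omega0_tpow[of "l - r" g]]
    by (simp add: A_def)
  have "tmul (vprod u 1 m) (tpow (omega0 g) l) = tmul A (tpow (omega0 g) r)"
    using tpow_add[of "omega0 g :: 'a tensor" "l - r" r] \<open>r \<le> l\<close> by (simp add: A_def tmul_assoc)
  then have "rot (2 * r) (tmul (vprod u 1 m) (tpow (omega0 g) l)) = tmul (tpow (omega0 g) r) A"
    using rot_tmul[OF A homogeneous_omega0_tpow] \<open>2 \<le> m\<close> by simp
  also have "\<dots> = tmul (omega0 g) (tmul (tpow (omega0 g) (r - 1)) A)"
    using \<open>0 < r\<close> by (cases r) (simp_all add: tpow_Suc tmul_assoc)
  finally have "(contract_last g ^^ l) (rot (2 * r) (tmul (vprod u 1 m) (tpow (omega0 g) l)))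
      = tmul (omega0 g) ((contract_last g ^^ l) (tmul (tpow (omega0 g) (r - 1)) A))"
    by (simp only:) (rule contract_last_pow_tmul_left[OF homogeneous_omega0
        homogeneous_tmul[OF homogeneous_omega0_tpow A]], use assms in simp)
  then show ?thesis
    using \<open>0 < g\<close> by (simp add: pipi_tmul_omega0_left)
qed

lemma rot_vprod_tail:
  fixes u :: "nat \<Rightarrow> nat \<Rightarrow> 'a::field"
  assumes "0 < t" and "t < m"
  shows "rot (2 * l + t) (tmul (vprod u 1 m) (tpow (omega0 g) l))
    = tmul (vprod u (Suc (m - t)) m) (tmul (tpow (omega0 g) l) (vprod u 1 (m - t)))"
proof -
  have B: "homogeneous (2 * l + t) (tmul (vprod u (Suc (m - t)) m) (tpow (omega0 g) l))"
    using homogeneous_tmul[OF homogeneous_vprod[of m "Suc (m - t)" u] homogeneous_omega0_tpow[of l g]]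
      assms by (simp add: add.commute)
  have "vprod u 1 m = tmul (vprod u 1 (m - t)) (vprod u (Suc (m - t)) m)"
    using vprod_split[of 1 "m - t" m u] assms by simp
  then have "tmul (vprod u 1 m) (tpow (omega0 g) l)
      = tmul (vprod u 1 (m - t)) (tmul (vprod u (Suc (m - t)) m) (tpow (omega0 g) l))"
    by (simp add: tmul_assoc)
  then show ?thesis
    using rot_tmul[OF homogeneous_vprod[of "m - t" 1 u] B] assms by (simp add: tmul_assoc)
qed

lemma pipi_contract_last_pow_rot_tail_odd:
  fixes u :: "nat \<Rightarrow> nat \<Rightarrow> 'a::field_char_0"
  assumes "0 < g" and "odd m" and "4 \<le> m" and "m \<le> 2 * l" and "odd t" and "t < m"
  shows "pipi g m ((contract_last g ^^ l) (rot (2 * l + t) (tmul (vprod u 1 m) (tpow (omega0 g) l)))) = 0"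
proof -
  have "even (m - t)"
    using assms by simp
  then obtain q where q: "m - t = 2 * q"
    by (erule evenE)
  then have "0 < q" "q \<le> l" "0 < t"
    using assms by (auto intro!: Nat.gr0I)
  define V where "V = vprod u (Suc (m - t)) m"
  have "(contract_last g ^^ l) (rot (2 * l + t) (tmul (vprod u 1 m) (tpow (omega0 g) l)))
      = (contract_last g ^^ (l - q)) ((contract_last g ^^ q)
          (tmul (tmul V (tpow (omega0 g) l)) (vprod u 1 (m - t))))"
    using \<open>0 < t\<close> \<open>t < m\<close> \<open>q \<le> l\<close>
    by (subst rot_vprod_tail) (simp_all add: V_def tmul_assoc funpow_add_apply[symmetric])
  also have "\<dots> = tscale (Cont g (map u [1..<Suc (m - t)]) * of_nat (2 * g) ^ (l - q))
      (tmul V (tpow (omega0 g) q))"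
    using q \<open>q \<le> l\<close>
    by (simp add: contract_last_pow_vprod contract_last_pow_tscale contract_last_pow_omega0 del: upt_Suc)
  finally show ?thesis
    using homogeneous_vprod[of m "Suc (m - t)" u] assms q \<open>0 < q\<close>
    by (simp add: pipi_tscale pipi_tmul_tpow_omega0_right V_def)
qed

lemma contract_last_pow_rot_tail_even_eq_Phi_tail:
  fixes u :: "nat \<Rightarrow> nat \<Rightarrow> 'a::field"
  assumes "in_V g (u 1)" and "Suc (2 * p) < m" and "p \<le> l"
  shows "(contract_last g ^^ l) (rot (2 * l + (m - Suc (2 * p))) (tmul (vprod u 1 m) (tpow (omega0 g) l)))
    = tscale ((-1) ^ (l - p)) (Phi_tail g m u (Suc (2 * p)))"
proof -
  define V where "V = vprod u (Suc (Suc (2 * p))) m"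
  have "vprod u 1 (Suc (2 * p)) = tmul (vt (u 1)) (vprod u 2 (Suc (2 * p)))"
    using vprod_split[of 1 1 "Suc (2 * p)" u] by (simp add: numeral_2_eq_2)
  then have "rot (2 * l + (m - Suc (2 * p))) (tmul (vprod u 1 m) (tpow (omega0 g) l))
      = tmul (tmul V (tmul (tpow (omega0 g) l) (vt (u 1)))) (vprod u 2 (Suc (2 * p)))"
    using rot_vprod_tail[where u=u and t="m - Suc (2 * p)" and m=m and l=l and g=g] assms(2)
    by (simp add: V_def tmul_assoc)
  then have "(contract_last g ^^ l) (rot (2 * l + (m - Suc (2 * p))) (tmul (vprod u 1 m) (tpow (omega0 g) l)))
      = (contract_last g ^^ (l - p)) ((contract_last g ^^ p)
          (tmul (tmul V (tmul (tpow (omega0 g) l) (vt (u 1)))) (vprod u 2 (Suc (2 * p)))))"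
    using assms(3) by (simp add: funpow_add_apply[symmetric])
  also have "\<dots> = tscale (Cont g (map u [2..<Suc (Suc (2 * p))]) * (-1) ^ (l - p))
      (tmul V (tmul (tpow (omega0 g) p) (vt (u 1))))"
    using assms by (simp add: contract_last_pow_vprod contract_last_pow_tscale contract_last_pow_omega0_vt
        del: upt_Suc)
  finally show ?thesis
    by (simp add: Phi_tail_def V_def mult.commute)
qed

text \<open>The rotations excluded by the last two hypotheses are those by 0, by an odd
  k < m and by m + 2l - k for such k.\<close>

lemma pipi_contract_last_pow_rot_eq_0:
  fixes u :: "nat \<Rightarrow> nat \<Rightarrow> 'a::field_char_0"
  assumes "0 < g" and "odd m" and "5 \<le> m" and "m + 1 \<le> 2 * l" and "in_V g (u m)"
    and "0 < s" and "s < m + 2 * l" and "odd s \<Longrightarrow> m \<le> s" and "2 * l < s \<Longrightarrow> odd s"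
  shows "pipi g m ((contract_last g ^^ l) (rot s (tmul (vprod u 1 m) (tpow (omega0 g) l)))) = 0"
proof (cases "s \<le> 2 * l")
  case True
  show ?thesis
  proof (cases "even s")
    case True
    then obtain r where "s = 2 * r" by (erule evenE)
    then show ?thesis
      using pipi_contract_last_pow_rot_even[of g r l m u] assms \<open>s \<le> 2 * l\<close> by simp
  next
    case False
    then obtain r where "s = Suc (2 * r)" by (auto elim: oddE)
    then show ?thesis
      using pipi_contract_last_pow_rot_odd_long[of g u m r l] assms \<open>s \<le> 2 * l\<close> False by simp
  qed
next
  case False
  then have "odd (s - 2 * l)" and "s = 2 * l + (s - 2 * l)"
    using assms by simp_all
  then show ?thesis
    using pipi_contract_last_pow_rot_tail_odd[of g m l "s - 2 * l" u] assms by simp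
qed

lemma pipi_contract_last_pow_rot_pair:
  fixes u :: "nat \<Rightarrow> nat \<Rightarrow> 'a::field"
  assumes "in_V g (u 1)" and "in_V g (u m)" and "m \<le> 2 * l" and "odd k" and "k \<le> m - 1" and "odd m"
  shows "pipi g m ((contract_last g ^^ l) (rot k (tmul (vprod u 1 m) (tpow (omega0 g) l))))
       + pipi g m ((contract_last g ^^ l) (rot (m + 2 * l - k) (tmul (vprod u 1 m) (tpow (omega0 g) l))))
    = pipi g m (tscale ((-1) ^ l * (-1) ^ ((k - 1) div 2)) (Phi_head g m u k + Phi_tail g m u k))"
proof -
  obtain r where k: "k = Suc (2 * r)"
    using \<open>odd k\<close> by (auto elim: oddE)
  then have "2 * r + 3 \<le> m" "r < l"
    using assms by presburger+
  have "m + 2 * l - k = 2 * l + (m - Suc (2 * r))"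
    using k \<open>2 * r + 3 \<le> m\<close> by simp
  moreover have "(-1) ^ (l - r) = ((-1) ^ l * (-1) ^ r :: 'a)"
    using \<open>r < l\<close> by (simp add: power_diff_conv_inverse)
  ultimately show ?thesis
    using contract_last_pow_rot_odd_eq_Phi_head[where u=u and g=g and m=m and r=r and l=l]
      contract_last_pow_rot_tail_even_eq_Phi_tail[where u=u and g=g and m=m and p=r and l=l]
      assms \<open>2 * r + 3 \<le> m\<close> \<open>r < l\<close> k
    by (simp add: tscale_add pipi_add)
qed

lemma sum_lessThan_split_reflected_pairs:
  fixes f :: "nat \<Rightarrow> 'b::comm_monoid_add"
  assumes "finite K" and "0 < h" and "h \<le> N"
    and K: "\<And>k. k \<in> K \<Longrightarrow> 0 < k \<and> k < h \<and> h \<le> N - k"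
    and vanish: "\<And>s. s < N \<Longrightarrow> 0 < s \<Longrightarrow> s \<notin> K \<Longrightarrow> s \<notin> (\<lambda>k. N - k) ` K \<Longrightarrow> f s = 0"
  shows "(\<Sum>s<N. f s) = f 0 + (\<Sum>k\<in>K. f k + f (N - k))"
proof -
  have bounds: "k < h" "h \<le> N - k" "N - k < N" if "k \<in> K" for k
    using K[OF that] by auto
  have "(\<Sum>s<N. f s) = (\<Sum>s\<in>insert 0 (K \<union> (\<lambda>k. N - k) ` K). f s)"
  proof (rule sum.mono_neutral_right)
    show "insert 0 (K \<union> (\<lambda>k. N - k) ` K) \<subseteq> {..<N}"
      using bounds \<open>0 < h\<close> \<open>h \<le> N\<close> by fastforce
    show "\<forall>s\<in>{..<N} - insert 0 (K \<union> (\<lambda>k. N - k) ` K). f s = 0"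
      using vanish by blast
  qed simp
  also have "\<dots> = f 0 + ((\<Sum>k\<in>K. f k) + (\<Sum>s\<in>(\<lambda>k. N - k) ` K. f s))"
  proof -
    have "0 \<notin> K \<union> (\<lambda>k. N - k) ` K" "K \<inter> (\<lambda>k. N - k) ` K = {}"
      using bounds \<open>0 < h\<close> by fastforce+
    then show ?thesis
      using \<open>finite K\<close> by (simp add: sum.union_disjoint)
  qed
  also have "(\<Sum>s\<in>(\<lambda>k. N - k) ` K. f s) = (\<Sum>k\<in>K. f (N - k))"
  proof (rule sum.reindex_cong)
    show "inj_on (\<lambda>k. N - k) K"
    proof (rule inj_onI)
      fix x y
      assume "x \<in> K" "y \<in> K" "N - x = N - y"
      then show "x = y"
        using bounds(2)[of x] bounds(2)[of y] \<open>0 < h\<close> by arith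
    qed
  qed simp_all
  finally show ?thesis
    by (simp add: sum.distrib)
qed

lemma sum_lessThan_rotations_split:
  fixes f :: "nat \<Rightarrow> 'b::comm_monoid_add"
  assumes "odd m" and "m \<le> 2 * l"
    and vanish: "\<And>s. 0 < s \<Longrightarrow> s < m + 2 * l \<Longrightarrow> (odd s \<Longrightarrow> m \<le> s) \<Longrightarrow>
      (2 * l < s \<Longrightarrow> odd s) \<Longrightarrow> f s = 0"
  shows "(\<Sum>s<m + 2 * l. f s)
    = f 0 + (\<Sum>k | 1 \<le> k \<and> k \<le> m - 1 \<and> odd k. f k + f (m + 2 * l - k))"
proof (rule sum_lessThan_split_reflected_pairs)
  show "0 < m"
    using \<open>odd m\<close> by (simp add: odd_pos)
  fix s
  assume s: "s < m + 2 * l" "0 < s" "s \<notin> {k. 1 \<le> k \<and> k \<le> m - 1 \<and> odd k}"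
    and reflected: "s \<notin> (\<lambda>k. m + 2 * l - k) ` {k. 1 \<le> k \<and> k \<le> m - 1 \<and> odd k}"
  show "f s = 0"
  proof (rule vanish)
    show "m \<le> s" if "odd s"
      using s that by auto
    show "odd s" if "2 * l < s"
    proof (rule ccontr)
      assume "\<not> odd s"
      then have "m - (s - 2 * l) \<in> {k. 1 \<le> k \<and> k \<le> m - 1 \<and> odd k}"
        using s that \<open>odd m\<close> by auto
      moreover have "s = m + 2 * l - (m - (s - 2 * l))"
        using s that by simp
      ultimately show False
        using reflected by blast
    qed
  qed (use s in simp_all)
qed (use assms in auto)

theorem lemma5p3:
  fixes g m l :: nat and u :: "nat \<Rightarrow> nat \<Rightarrow> 'a::field_char_0"
  assumes "0 < g" and "odd m" and "5 \<le> m" and "m + 1 \<le> 2 * l"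
    and "\<forall>k\<in>{1..m}. \<forall>i. 2 * g \<le> i \<longrightarrow> u k i = 0"
  shows "pipi g m (contr g m l (cyc (tmul (vprod u 1 m) (tpow (omega0 g) l))))
       = pipi g m (\<lambda>w. of_nat (2*g) ^ l * vprod u 1 m w + (-1) ^ l * Phi g m u w)"
proof -
  let ?X = "tmul (vprod u 1 m) (tpow (omega0 g) l)"
  let ?T = "\<lambda>s. pipi g m ((contract_last g ^^ l) (rot s ?X))"
  let ?K = "{k. 1 \<le> k \<and> k \<le> m - 1 \<and> odd k}"
  have u: "in_V g (u 1)" "in_V g (u m)"
    using assms(3,5) by (auto simp: in_V_def)
  have "homogeneous (m + 2 * l) ?X"
    using homogeneous_tmul[OF homogeneous_vprod[of m 1 u] homogeneous_omega0_tpow[of l g]] by simp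
  then have "pipi g m (contr g m l (cyc ?X)) = (\<Sum>s<m + 2 * l. ?T s)"
    using assms(3) by (simp add: pipi_contr cyc_eq_sum_rot contract_last_pow_sum pipi_sum)
  also have "\<dots> = ?T 0 + (\<Sum>k\<in>?K. ?T k + ?T (m + 2 * l - k))"
    by (rule sum_lessThan_rotations_split; (rule pipi_contract_last_pow_rot_eq_0)?) (use assms u in auto)
  also have "\<dots> = pipi g m (tscale (of_nat (2*g) ^ l) (vprod u 1 m))
      + (\<Sum>k\<in>?K. pipi g m (tscale ((-1) ^ l * (-1) ^ ((k - 1) div 2)) (Phi_head g m u k + Phi_tail g m u k)))"
  proof (intro arg_cong2[where f = "(+)"] sum.cong refl)
    show "?T 0 = pipi g m (tscale (of_nat (2*g) ^ l) (vprod u 1 m))"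
      by (simp add: contract_last_pow_omega0)
    show "?T k + ?T (m + 2 * l - k)
        = pipi g m (tscale ((-1) ^ l * (-1) ^ ((k - 1) div 2)) (Phi_head g m u k + Phi_tail g m u k))"
      if "k \<in> ?K" for k
      by (rule pipi_contract_last_pow_rot_pair) (use assms u that in auto)
  qed
  also have "\<dots> = pipi g m (tscale (of_nat (2*g) ^ l) (vprod u 1 m) + tscale ((-1) ^ l) (Phi g m u))"
    by (simp add: pipi_add pipi_sum Phi_eq_sum tscale_sum)
  also have "tscale (of_nat (2*g) ^ l) (vprod u 1 m) + tscale ((-1) ^ l) (Phi g m u)
      = (\<lambda>w. of_nat (2*g) ^ l * vprod u 1 m w + (-1) ^ l * Phi g m u w)"
    by (simp add: fun_eq_iff tscale_apply)
  finally show ?thesis .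
qed

end
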